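(* Let $X$ be an extensible marked Dynkin diagram with $d$ nodes, and let $\gamma=(x,y)\in\mathcal H_2$ with $|\gamma|_X=0$. Let $l=\max(\ell(x),d)$ and $r=\ell(y)$. Then there exist integers $p_i$ ($1\le i\le l-1$), $q_j$ ($1\le j\le r-1$) and $s$ such that for all $n\ge l+r$, $$\gamma^{(n)}=\sum_{i=1}^{l-1}p_i\alpha_i^{(n)}+\sum_{i=l}^{n-r+1}s\,\alpha_i^{(n)}+\sum_{i=n-r+2}^{n}q_{n-i+1}\alpha_i^{(n)}.$$
   Context: A marked Dynkin diagram $X$ has nodes $1,\dots,d$ with node $d$ distinguished and symmetrizable generalized Cartan matrix $C(X)$. For $n\ge d$, $X_n$ is obtained by attaching a simply-laced chain of new nodes $d+1,\dots,n$ to node $d$ (so $C(X_n)$ has $C(X)$ as upper-left block, $2$ on the remaining diagonal, $-1$ in positions $(i,i+1),(i+1,i)$ for $d\le i<n$, $0$ elsewhere); $X_{d-1}$ is $X$ with node $d$ deleted. $\det(Y)$ is the determinant of the generalized Cartan matrix of $Y$. The sequence $\det(X_n)$, $n\ge d$, is arithmetic with common difference $\Delta$; $X$ is extensible if $\Delta\ne0$, $\det(X)\ne0$ and $\gcd(\Delta,\det X)=1$. For $\mathfrak g(X_n)$: simple roots $\alpha_i^{(n)}$, fundamental weights $\omega_i^{(n)}$, $\overline{\omega}_i^{(n)}=\omega_{n-i+1}^{(n)}$. $\mathcal H_1$ is the set of finitely supported integer sequences, $\ell(x)=\max\{i:x_i\ne0\}$, $\mathcal H_2=\mathcal H_1\times\mathcal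 H_1$; for $\gamma=(x,y)$ and $n\ge\ell(y)+\max(d,\ell(x))$, $\gamma^{(n)}=\sum_ix_i\omega_i^{(n)}+\sum_iy_i\overline{\omega}_i^{(n)}$. Integers $a_i$: for $1\le i\le d$, $a_i=\det(X)(C(X)^{-1})_{d\,i}$; for $i>d$, $a_i=\det(X_{i-1})$. $|\gamma|_X=\sum_ia_ix_i-\Delta\sum_i i\,y_i$. *)

theory Defs
  imports "Jordan_Normal_Form.Determinant"
begin

text \<open>A marked Dynkin diagram X with nodes 1..d is given by its generalized Cartan
matrix C :: nat => nat => int, of which only the entries with indices in 1..d matter;
node d is the marked node.\<close>

definition is_gcm :: "(nat \<Rightarrow> nat \<Rightarrow> int) \<Rightarrow> nat \<Rightarrow> bool" where
  "is_gcm C d \<longleftrightarrow>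
     (\<forall>i\<in>{1..d}. C i i = 2) \<and>
     (\<forall>i\<in>{1..d}. \<forall>j\<in>{1..d}. i \<noteq> j \<longrightarrow> C i j \<le> 0) \<and>
     (\<forall>i\<in>{1..d}. \<forall>j\<in>{1..d}. C i j = 0 \<longleftrightarrow> C j i = 0)"

definition symmetrizable :: "(nat \<Rightarrow> nat \<Rightarrow> int) \<Rightarrow> nat \<Rightarrow> bool" where
  "symmetrizable C d \<longleftrightarrow>
     (\<exists>e :: nat \<Rightarrow> rat. (\<forall>i\<in>{1..d}. e i > 0) \<and>
        (\<forall>i\<in>{1..d}. \<forall>j\<in>{1..d}. e i * of_int (C i j) = e j * of_int (C j i)))"

text \<open>Cartan matrix of X_n (n >= d): C as upper-left block, a simply-laced chain
d - (d+1) - ... - n attached at node d.\<close>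

definition cartan_ext :: "(nat \<Rightarrow> nat \<Rightarrow> int) \<Rightarrow> nat \<Rightarrow> nat \<Rightarrow> nat \<Rightarrow> int" where
  "cartan_ext C d i j =
     (if i \<le> d \<and> j \<le> d then C i j
      else if i = j then 2
      else if (i = j + 1 \<or> j = i + 1) \<and> d \<le> min i j then -1
      else 0)"

text \<open>The Cartan matrix of X_n as an n x n matrix (0-based indices in the library).
For n = d this is C(X); for n = d - 1 it is C(X) with node d deleted.\<close>

definition cartan_mat :: "(nat \<Rightarrow> nat \<Rightarrow> int) \<Rightarrow> nat \<Rightarrow> nat \<Rightarrow> int mat" where
  "cartan_mat C d n = mat n n (\<lambda>(i, j). cartan_ext C d (i + 1) (j + 1))"

definition detX :: "(nat \<Rightarrow> nat \<Rightarrow> int) \<Rightarrow> nat \<Rightarrow> nat \<Rightarrow> int" where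
  "detX C d n = det (cartan_mat C d n)"

text \<open>Common difference of the arithmetic sequence det(X_n), n >= d.\<close>

definition Delta :: "(nat \<Rightarrow> nat \<Rightarrow> int) \<Rightarrow> nat \<Rightarrow> int" where
  "Delta C d = detX C d (d + 1) - detX C d d"

definition extensible :: "(nat \<Rightarrow> nat \<Rightarrow> int) \<Rightarrow> nat \<Rightarrow> bool" where
  "extensible C d \<longleftrightarrow> Delta C d \<noteq> 0 \<and> detX C d d \<noteq> 0 \<and> gcd (Delta C d) (detX C d d) = 1"

definition cartan_inv :: "(nat \<Rightarrow> nat \<Rightarrow> int) \<Rightarrow> nat \<Rightarrow> rat mat" where
  "cartan_inv C d = (SOME B. B \<in> carrier_mat d d \<and>
      map_mat of_int (cartan_mat C d d) * B = 1\<^sub>m d)"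

definition a_coef :: "(nat \<Rightarrow> nat \<Rightarrow> int) \<Rightarrow> nat \<Rightarrow> nat \<Rightarrow> rat" where
  "a_coef C d i = (if i \<le> d then of_int (detX C d d) * cartan_inv C d $$ (d - 1, i - 1)
                   else of_int (detX C d (i - 1)))"

text \<open>Finitely supported integer sequences indexed from 1 (the value at 0 is ignored).\<close>

definition fin_supp :: "(nat \<Rightarrow> int) \<Rightarrow> bool" where
  "fin_supp x \<longleftrightarrow> finite {i. x i \<noteq> 0}"

definition ell :: "(nat \<Rightarrow> int) \<Rightarrow> nat" where
  "ell x = Max ({0} \<union> {i. 1 \<le> i \<and> x i \<noteq> 0})"

definition gamma_norm :: "(nat \<Rightarrow> nat \<Rightarrow> int) \<Rightarrow> nat \<Rightarrow> (nat \<Rightarrow> int) \<Rightarrow> (nat \<Rightarrow> int) \<Rightarrow> rat" where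
  "gamma_norm C d x y =
     (\<Sum>i=1..ell x. a_coef C d i * of_int (x i))
     - of_int (Delta C d) * of_int (\<Sum>i=1..ell y. int i * y i)"

text \<open>Coefficient of omega_j^{(n)} in gamma^{(n)} = sum x_i omega_i + sum y_i omega_{n-i+1}.\<close>

definition gamma_coef :: "(nat \<Rightarrow> int) \<Rightarrow> (nat \<Rightarrow> int) \<Rightarrow> nat \<Rightarrow> nat \<Rightarrow> int" where
  "gamma_coef x y n j = x j + y (n + 1 - j)"

text \<open>A weight with omega-coefficients g equals sum_i c_i alpha_i^{(n)} iff
g_j = sum_i C(X_n)_{j i} c_i, since <alpha_j^vee, alpha_i> = C(X_n)_{j i}.\<close>

definition is_root_combination :: "(nat \<Rightarrow> nat \<Rightarrow> int) \<Rightarrow> nat \<Rightarrow> nat \<Rightarrow> (nat \<Rightarrow> int) \<Rightarrow> (nat \<Rightarrow> int) \<Rightarrow> bool" where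
  "is_root_combination C d n g c \<longleftrightarrow>
     (\<forall>j\<in>{1..n}. g j = (\<Sum>i=1..n. cartan_ext C d j i * c i))"

end

theory Submission
  imports Defs
begin

text \<open>Write gamma^(n) = \<Sum>_i c_i alpha_i. Along the chain d < j \<le> n the rows of C(X_n) form the
  discrete Laplacian, so there c is the sum of two explicit potentials: one generated by x and
  vanishing from l on, one generated by y and equal to s = \<Sum>_i i y_i at distance at least r from the
  end of the chain. This fixes c_d and c_(d+1); the rows 1..d then ask for an integer solution v of
  C(X) v = x + c_(d+1) e_d whose last coordinate is c_d. By Cramer's rule the rational solution has
  this last coordinate exactly when |gamma|_X = 0. It is integral because det X_(d-1) = det X - Delta
  is prime to det X, and Cramer's rule for the leading block C(X_(d-1)) shows that det X_(d-1) times
  each coordinate of (det X) v is divisible by det X.\<close>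

lemma cartan_mat_dim [simp]:
  "dim_row (cartan_mat C d n) = n" "dim_col (cartan_mat C d n) = n"
  by (simp_all add: cartan_mat_def)

lemma cartan_mat_carrier [simp]: "cartan_mat C d n \<in> carrier_mat n n"
  by (rule carrier_matI) simp_all

lemma cartan_mat_index [simp]:
  "i < n \<Longrightarrow> j < n \<Longrightarrow> cartan_mat C d n $$ (i, j) = cartan_ext C d (Suc i) (Suc j)"
  by (simp add: cartan_mat_def)

lemma mat_delete_cartan_mat_last: "mat_delete (cartan_mat C d (Suc k)) k k = cartan_mat C d k"
  by (rule eq_matI) (auto simp: mat_delete_def)

lemma det_expand_last_col_single:
  fixes A :: "'a :: comm_ring_1 mat"
  assumes A: "A \<in> carrier_mat (Suc n) (Suc n)" and col: "\<And>i. i < n \<Longrightarrow> A $$ (i, n) = 0"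
  shows "det A = A $$ (n, n) * det (mat_delete A n n)"
proof -
  have "det A = (\<Sum>i<Suc n. A $$ (i, n) * cofactor A i n)"
    by (rule laplace_expansion_column[OF A]) simp
  also have "\<dots> = A $$ (n, n) * cofactor A n n"
    using col by (simp add: sum.neutral)
  finally show ?thesis
    by (simp add: cofactor_def flip: mult_2)
qed

lemma det_expand_last_row_two:
  fixes A :: "'a :: comm_ring_1 mat"
  assumes A: "A \<in> carrier_mat (Suc (Suc n)) (Suc (Suc n))"
    and row: "\<And>j. j < n \<Longrightarrow> A $$ (Suc n, j) = 0"
  shows "det A = A $$ (Suc n, Suc n) * det (mat_delete A (Suc n) (Suc n))
               - A $$ (Suc n, n) * det (mat_delete A (Suc n) n)"
proof -
  have "det A = (\<Sum>j<Suc (Suc n). A $$ (Suc n, j) * cofactor A (Suc n) j)"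
    by (rule laplace_expansion_row[OF A]) simp
  also have "\<dots> = A $$ (Suc n, n) * cofactor A (Suc n) n
                 + A $$ (Suc n, Suc n) * cofactor A (Suc n) (Suc n)"
    using row by (simp add: sum.neutral)
  finally show ?thesis
    by (simp add: cofactor_def flip: mult_2)
qed

lemma detX_recurrence:
  assumes "1 \<le> d" "d \<le> k"
  shows "detX C d (Suc k) = 2 * detX C d k - detX C d (k - 1)"
proof -
  obtain m where k: "k = Suc m" using assms by (cases k) auto
  define N where "N = cartan_mat C d (Suc (Suc m))"
  define P where "P = mat_delete N (Suc m) m"
  have P: "P \<in> carrier_mat (Suc m) (Suc m)"
    unfolding P_def N_def by (rule carrier_matI) simp_all
  have "det P = P $$ (m, m) * det (mat_delete P m m)"
    by (rule det_expand_last_col_single[OF P])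
      (use assms k in \<open>auto simp: P_def N_def mat_delete_def cartan_ext_def\<close>)
  also have "P $$ (m, m) = -1"
    using assms k by (simp add: P_def N_def mat_delete_def cartan_ext_def)
  also have "mat_delete P m m = cartan_mat C d m"
    by (rule eq_matI) (auto simp: P_def N_def mat_delete_def)
  finally have det_P: "det P = - detX C d m"
    by (simp add: detX_def)
  have "det N = N $$ (Suc m, Suc m) * det (mat_delete N (Suc m) (Suc m)) - N $$ (Suc m, m) * det P"
    unfolding P_def N_def
    by (rule det_expand_last_row_two) (use assms k in \<open>auto simp: cartan_ext_def\<close>)
  moreover have "N $$ (Suc m, Suc m) = 2" "N $$ (Suc m, m) = -1"
    using assms k by (auto simp: N_def cartan_ext_def)
  ultimately show ?thesis
    using k det_P by (simp add: detX_def N_def mat_delete_cartan_mat_last)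
qed

lemma arith_progression_of_second_diff_zero:
  fixes f :: "nat \<Rightarrow> 'a :: comm_ring_1"
  assumes "\<And>k. f (Suc (Suc k)) = 2 * f (Suc k) - f k"
  shows "f k = f 0 + of_nat k * (f 1 - f 0)"
proof -
  have diff: "f (Suc k) - f k = f 1 - f 0" for k
    by (induction k) (simp_all add: assms)
  show ?thesis
  proof (induction k)
    case (Suc k)
    have "f (Suc k) = f k + (f 1 - f 0)"
      using diff[of k] by (simp add: algebra_simps)
    also have "\<dots> = f 0 + of_nat (Suc k) * (f 1 - f 0)"
      unfolding Suc.IH by (simp add: algebra_simps)
    finally show ?case .
  qed simp
qed

lemma detX_arith_progression:
  assumes "1 \<le> d" "d \<le> Suc k"
  shows "detX C d k = detX C d d + (int k - int d) * Delta C d"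
proof -
  define f where "f m = detX C d (d - 1 + m)" for m
  have "f (Suc (Suc m)) = 2 * f (Suc m) - f m" for m
    using detX_recurrence[of d "d + m" C] assms(1)
    by (simp add: f_def Suc_diff_le)
  then have arith: "f m = f 0 + of_nat m * (f 1 - f 0)" for m
    by (rule arith_progression_of_second_diff_zero)
  have step: "f 1 - f 0 = Delta C d"
    using detX_recurrence[of d d C] assms(1) by (simp add: f_def Delta_def)
  have progression: "f m = f 0 + of_nat m * Delta C d" for m
    using arith[of m] by (simp only: step)
  have "f 1 = detX C d d"
    using assms(1) by (simp add: f_def)
  with step have "f 0 = detX C d d - Delta C d"
    by simp
  with progression[of "Suc k - d"] show ?thesis
    using assms by (simp add: f_def of_nat_diff algebra_simps)
qed

lemma coprime_detX_pred:
  assumes "1 \<le> d" "extensible C d"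
  shows "coprime (detX C d d) (detX C d (d - 1))"
proof -
  have "detX C d (d - 1) = detX C d d - Delta C d"
    using detX_arith_progression[of d "d - 1" C] assms(1) by (simp add: of_nat_diff)
  moreover have "gcd (detX C d d - Delta C d) (detX C d d) = 1"
    using gcd_diff2[of "detX C d d" "Delta C d"] assms(2) by (simp add: extensible_def)
  ultimately show ?thesis
    by (simp add: coprime_iff_gcd_eq_1 gcd.commute)
qed

lemma adj_mat_mult_entry:
  assumes A: "A \<in> carrier_mat n n" and "i < n" "j < n"
  shows "(\<Sum>k<n. adj_mat A $$ (i, k) * A $$ (k, j)) = (if i = j then det A else 0)"
proof -
  have "(\<Sum>k<n. adj_mat A $$ (i, k) * A $$ (k, j)) = (adj_mat A * A) $$ (i, j)"
    using adj_mat(1)[OF A] A assms by (simp add: scalar_prod_def lessThan_atLeast0)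
  also have "\<dots> = (if i = j then det A else 0)"
    using adj_mat(3)[OF A] assms by simp
  finally show ?thesis .
qed

lemma mult_adj_mat_entry:
  assumes A: "A \<in> carrier_mat n n" and "i < n" "j < n"
  shows "(\<Sum>k<n. A $$ (i, k) * adj_mat A $$ (k, j)) = (if i = j then det A else 0)"
proof -
  have "(\<Sum>k<n. A $$ (i, k) * adj_mat A $$ (k, j)) = (A * adj_mat A) $$ (i, j)"
    using adj_mat(1)[OF A] A assms by (simp add: scalar_prod_def lessThan_atLeast0)
  also have "\<dots> = (if i = j then det A else 0)"
    using adj_mat(2)[OF A] assms by simp
  finally show ?thesis .
qed

lemma adj_mat_diag:
  assumes A: "A \<in> carrier_mat n n" and "i < n"
  shows "adj_mat A $$ (i, i) = det (mat_delete A i i)"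
  using assms by (simp add: adj_mat_def cofactor_def flip: mult_2)

lemma adj_mat_cramer:
  assumes A: "A \<in> carrier_mat n n" and k: "k < n"
  shows "(\<Sum>j<n. adj_mat A $$ (k, j) * (\<Sum>i<n. A $$ (j, i) * z i)) = det A * z k"
proof -
  have "(\<Sum>j<n. adj_mat A $$ (k, j) * (\<Sum>i<n. A $$ (j, i) * z i))
      = (\<Sum>j<n. \<Sum>i<n. adj_mat A $$ (k, j) * A $$ (j, i) * z i)"
    by (simp add: sum_distrib_left mult.assoc)
  also have "\<dots> = (\<Sum>i<n. (\<Sum>j<n. adj_mat A $$ (k, j) * A $$ (j, i)) * z i)"
    by (subst sum.swap) (simp add: sum_distrib_right)
  also have "\<dots> = (\<Sum>i<n. if k = i then det A * z i else 0)"
    using adj_mat_mult_entry[OF A k] by (intro sum.cong) auto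
  finally show ?thesis
    using k by simp
qed

lemma mult_adj_mat_cramer:
  assumes A: "A \<in> carrier_mat n n" and j: "j < n"
  shows "(\<Sum>k<n. A $$ (j, k) * (\<Sum>i<n. adj_mat A $$ (k, i) * b i)) = det A * b j"
proof -
  have "(\<Sum>k<n. A $$ (j, k) * (\<Sum>i<n. adj_mat A $$ (k, i) * b i))
      = (\<Sum>k<n. \<Sum>i<n. A $$ (j, k) * adj_mat A $$ (k, i) * b i)"
    by (simp add: sum_distrib_left mult.assoc)
  also have "\<dots> = (\<Sum>i<n. (\<Sum>k<n. A $$ (j, k) * adj_mat A $$ (k, i)) * b i)"
    by (subst sum.swap) (simp add: sum_distrib_right)
  also have "\<dots> = (\<Sum>i<n. if j = i then det A * b i else 0)"
    using mult_adj_mat_entry[OF A j] by (intro sum.cong) auto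
  finally show ?thesis
    using j by simp
qed

lemma dvd_coords_of_coprime_leading_minor:
  fixes M :: "int mat"
  assumes M: "M \<in> carrier_mat (Suc n) (Suc n)"
    and cop: "coprime (det M) (det (mat_delete M n n))"
    and rows: "\<And>j. j < Suc n \<Longrightarrow> det M dvd (\<Sum>i<Suc n. M $$ (j, i) * z i)"
    and last: "det M dvd z n" and k: "k < Suc n"
  shows "det M dvd z k"
proof (cases "k = n")
  case True
  with last show ?thesis by simp
next
  case False
  define M' where "M' = mat_delete M n n"
  have M': "M' \<in> carrier_mat n n"
    using mat_delete_carrier[OF M, of n n] by (simp add: M'_def)
  have block_rows: "det M dvd (\<Sum>i<n. M' $$ (j, i) * z i)" if "j < n" for j
  proof -
    have "(\<Sum>i<n. M' $$ (j, i) * z i) = (\<Sum>i<Suc n. M $$ (j, i) * z i) - M $$ (j, n) * z n"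
      using M that by (simp add: M'_def mat_delete_def)
    then show ?thesis
      using rows[of j] last that by (simp add: dvd_diff del: sum.lessThan_Suc)
  qed
  have "det M' * z k = (\<Sum>j<n. adj_mat M' $$ (k, j) * (\<Sum>i<n. M' $$ (j, i) * z i))"
    using adj_mat_cramer[OF M'] False k by simp
  also have "det M dvd \<dots>"
    by (rule dvd_sum, rule dvd_mult, rule block_rows) simp
  finally show ?thesis
    using cop by (simp add: M'_def coprime_dvd_mult_right_iff)
qed

lemma int_solvable_with_last_coordinate:
  fixes M :: "int mat"
  assumes M: "M \<in> carrier_mat (Suc n) (Suc n)" and det: "det M \<noteq> 0"
    and cop: "coprime (det M) (det (mat_delete M n n))"
    and last: "(\<Sum>i<Suc n. adj_mat M $$ (n, i) * b i) = t * det M"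
  shows "\<exists>v. v n = t \<and> (\<forall>j<Suc n. (\<Sum>k<Suc n. M $$ (j, k) * v k) = b j)"
proof -
  define z where "z k = (\<Sum>i<Suc n. adj_mat M $$ (k, i) * b i)" for k
  have Mz: "(\<Sum>k<Suc n. M $$ (j, k) * z k) = det M * b j" if "j < Suc n" for j
    unfolding z_def by (rule mult_adj_mat_cramer[OF M that])
  have z_last: "z n = t * det M"
    using last by (simp add: z_def)
  define v where "v k = z k div det M" for k
  have z_v: "z k = det M * v k" if "k < Suc n" for k
    using dvd_coords_of_coprime_leading_minor[OF M cop _ _ that, of z] Mz z_last
    by (simp add: v_def)
  have "v n = t"
    using z_last det by (simp add: v_def)
  moreover have "(\<Sum>k<Suc n. M $$ (j, k) * v k) = b j" if "j < Suc n" for j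
  proof -
    have "det M * (\<Sum>k<Suc n. M $$ (j, k) * v k) = (\<Sum>k<Suc n. M $$ (j, k) * (det M * v k))"
      by (simp add: sum_distrib_left mult.left_commute del: sum.lessThan_Suc)
    also have "\<dots> = (\<Sum>k<Suc n. M $$ (j, k) * z k)"
      using z_v by (simp del: sum.lessThan_Suc)
    finally show ?thesis
      using Mz[OF that] det by simp
  qed
  ultimately show ?thesis by blast
qed

lemma cartan_block_solvable:
  assumes "1 \<le> d" "extensible C d"
    and "(\<Sum>i<d. adj_mat (cartan_mat C d d) $$ (d - 1, i) * b i) = t * detX C d d"
  shows "\<exists>v. v (d - 1) = t \<and> (\<forall>j<d. (\<Sum>k<d. cartan_mat C d d $$ (j, k) * v k) = b j)"
proof -
  obtain e where e: "d = Suc e"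
    using assms(1) by (cases d) auto
  show ?thesis
    using int_solvable_with_last_coordinate[of "cartan_mat C d d" e b t]
      coprime_detX_pred[OF assms(1,2)] assms(2,3)
    by (simp add: e detX_def extensible_def mat_delete_cartan_mat_last)
qed

lemma of_int_adj_mat_mult:
  fixes A :: "int mat"
  assumes A: "A \<in> carrier_mat n n"
  shows "map_mat (of_int :: int \<Rightarrow> rat) (adj_mat A) * map_mat of_int A = of_int (det A) \<cdot>\<^sub>m 1\<^sub>m n"
    and "map_mat (of_int :: int \<Rightarrow> rat) A * map_mat of_int (adj_mat A) = of_int (det A) \<cdot>\<^sub>m 1\<^sub>m n"
proof -
  have scalar: "map_mat (of_int :: int \<Rightarrow> rat) (det A \<cdot>\<^sub>m 1\<^sub>m n) = of_int (det A) \<cdot>\<^sub>m 1\<^sub>m n"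
    by (rule eq_matI) auto
  show "map_mat (of_int :: int \<Rightarrow> rat) (adj_mat A) * map_mat of_int A = of_int (det A) \<cdot>\<^sub>m 1\<^sub>m n"
    by (simp add: of_int_hom.mat_hom_mult[OF adj_mat(1)[OF A] A, symmetric] adj_mat(3)[OF A] scalar)
  show "map_mat (of_int :: int \<Rightarrow> rat) A * map_mat of_int (adj_mat A) = of_int (det A) \<cdot>\<^sub>m 1\<^sub>m n"
    by (simp add: of_int_hom.mat_hom_mult[OF A adj_mat(1)[OF A], symmetric] adj_mat(2)[OF A] scalar)
qed

lemma rat_inverse_entry_eq_adj:
  fixes A :: "int mat" and B :: "rat mat"
  assumes A: "A \<in> carrier_mat n n" and B: "B \<in> carrier_mat n n"
    and inv: "map_mat of_int A * B = 1\<^sub>m n" and ij: "i < n" "j < n"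
  shows "of_int (det A) * B $$ (i, j) = of_int (adj_mat A $$ (i, j))"
proof -
  let ?adj = "map_mat (of_int :: int \<Rightarrow> rat) (adj_mat A)"
  have adj: "?adj \<in> carrier_mat n n"
    using adj_mat(1)[OF A] by simp
  have "?adj = ?adj * (map_mat of_int A * B)"
    using inv adj by simp
  also have "\<dots> = (?adj * map_mat of_int A) * B"
    using A B adj by (simp add: assoc_mult_mat)
  also have "\<dots> = of_int (det A) \<cdot>\<^sub>m B"
    using of_int_adj_mat_mult(1)[OF A] B by (simp add: mult_smult_assoc_mat[OF one_carrier_mat B])
  finally have "?adj $$ (i, j) = (of_int (det A) \<cdot>\<^sub>m B) $$ (i, j)"
    by simp
  then show ?thesis
    using adj B ij by simp
qed

lemma cartan_inv_inverse:
  assumes "detX C d d \<noteq> 0"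
  shows "cartan_inv C d \<in> carrier_mat d d \<and> map_mat of_int (cartan_mat C d d) * cartan_inv C d = 1\<^sub>m d"
  unfolding cartan_inv_def
proof (rule someI_ex, intro exI conjI)
  let ?M = "cartan_mat C d d"
  let ?adj = "map_mat (of_int :: int \<Rightarrow> rat) (adj_mat ?M)"
  have adj: "?adj \<in> carrier_mat d d"
    using adj_mat(1)[OF cartan_mat_carrier] by simp
  then show "(1 / of_int (det ?M)) \<cdot>\<^sub>m ?adj \<in> carrier_mat d d"
    by simp
  have "map_mat of_int ?M * ((1 / of_int (det ?M)) \<cdot>\<^sub>m ?adj) = (1 / of_int (det ?M)) \<cdot>\<^sub>m (map_mat of_int ?M * ?adj)"
    using adj by (simp add: mult_smult_distrib[of _ d d _ d])
  also have "\<dots> = (1 / of_int (det ?M)) \<cdot>\<^sub>m (of_int (det ?M) \<cdot>\<^sub>m 1\<^sub>m d)"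
    by (simp add: of_int_adj_mat_mult(2)[OF cartan_mat_carrier])
  also have "\<dots> = 1\<^sub>m d"
    using assms by (intro eq_matI) (auto simp: detX_def)
  finally show "map_mat of_int ?M * ((1 / of_int (det ?M)) \<cdot>\<^sub>m ?adj) = 1\<^sub>m d" .
qed

lemma a_coef_block:
  assumes "detX C d d \<noteq> 0" "1 \<le> i" "i \<le> d"
  shows "a_coef C d i = of_int (adj_mat (cartan_mat C d d) $$ (d - 1, i - 1))"
  using rat_inverse_entry_eq_adj[of "cartan_mat C d d" d "cartan_inv C d" "d - 1" "i - 1"]
    cartan_inv_inverse[OF assms(1)] assms
  by (simp add: a_coef_def detX_def)

lemma a_coef_chain:
  assumes "1 \<le> d" "d < i"
  shows "a_coef C d i = of_int (detX C d d + (int i - int d - 1) * Delta C d)"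
  using detX_arith_progression[of d "i - 1" C] assms by (simp add: a_coef_def of_nat_diff)

lemma fin_supp_beyond_ell:
  assumes "fin_supp x" "ell x < i"
  shows "x i = 0"
proof (rule ccontr)
  assume "x i \<noteq> 0"
  have "finite ({0} \<union> {i. 1 \<le> i \<and> x i \<noteq> 0})"
    using assms(1) unfolding fin_supp_def by (auto intro: finite_subset)
  then have "i \<le> ell x"
    using \<open>x i \<noteq> 0\<close> assms(2) unfolding ell_def by (auto intro: Max_ge)
  with assms(2) show False by simp
qed

text \<open>Both potentials solve the discrete Poisson equation \<open>2 c k - c (k - 1) - c (k + 1) = f k\<close>
  of the simply-laced chain: \<open>tail_potential y r\<close> for \<open>f = y\<close>, vanishing at \<open>0\<close> and constant
  from \<open>r\<close> on; \<open>head_potential x l\<close> for \<open>f = x\<close>, vanishing from \<open>l\<close> on.\<close>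

definition tail_potential :: "(nat \<Rightarrow> int) \<Rightarrow> nat \<Rightarrow> nat \<Rightarrow> int" where
  "tail_potential y r k = (\<Sum>m=1..r. int (min k m) * y m)"

definition head_potential :: "(nat \<Rightarrow> int) \<Rightarrow> nat \<Rightarrow> nat \<Rightarrow> int" where
  "head_potential x l i = - (\<Sum>k=1..l. int (k - i) * x k)"

lemma tail_potential_0 [simp]: "tail_potential y r 0 = 0"
  by (simp add: tail_potential_def)

lemma tail_potential_const:
  assumes "r \<le> k"
  shows "tail_potential y r k = (\<Sum>m=1..r. int m * y m)"
  unfolding tail_potential_def using assms by (intro sum.cong) auto

lemma head_potential_eq_0:
  assumes "l \<le> i"
  shows "head_potential x l i = 0"
  unfolding head_potential_def using assms by (auto intro!: sum.neutral)

lemma tail_potential_second_diff: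
  assumes "1 \<le> k" and y: "\<And>m. r < m \<Longrightarrow> y m = 0"
  shows "2 * tail_potential y r k - tail_potential y r (k + 1) - tail_potential y r (k - 1) = y k"
proof -
  have "2 * tail_potential y r k - tail_potential y r (k + 1) - tail_potential y r (k - 1)
      = (\<Sum>m=1..r. (2 * int (min k m) - int (min (k + 1) m) - int (min (k - 1) m)) * y m)"
    by (simp add: tail_potential_def sum_subtractf sum.distrib sum_distrib_left algebra_simps)
  also have "\<dots> = (\<Sum>m=1..r. if m = k then y m else 0)"
    using assms(1) by (intro sum.cong) auto
  also have "\<dots> = y k"
    using assms by (auto simp: sum.delta)
  finally show ?thesis .
qed

lemma head_potential_second_diff:
  assumes "1 \<le> i" and x: "\<And>k. l < k \<Longrightarrow> x k = 0"
  shows "2 * head_potential x l i - head_potential x l (i - 1) - head_potential x l (i + 1) = x i"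
proof -
  have "2 * head_potential x l i - head_potential x l (i - 1) - head_potential x l (i + 1)
      = (\<Sum>k=1..l. (int (k - (i - 1)) + int (k - (i + 1)) - 2 * int (k - i)) * x k)"
    by (simp add: head_potential_def sum_subtractf sum.distrib sum_distrib_left algebra_simps)
  also have "\<dots> = (\<Sum>k=1..l. if k = i then x k else 0)"
    using assms(1) by (intro sum.cong) auto
  also have "\<dots> = x i"
    using assms by (auto simp: sum.delta)
  finally show ?thesis .
qed

lemma head_potential_weighted_diff:
  fixes D \<Delta> :: int
  shows "D * head_potential x l d - (D - \<Delta>) * head_potential x l (Suc d)
       = - (\<Sum>i=Suc d..l. (D + (int i - int d - 1) * \<Delta>) * x i)"
proof -
  have "D * head_potential x l d - (D - \<Delta>) * head_potential x l (Suc d)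
      = (\<Sum>i=1..l. ((D - \<Delta>) * int (i - Suc d) - D * int (i - d)) * x i)"
    by (simp add: head_potential_def sum_distrib_left sum_subtractf sum.distrib algebra_simps)
  also have "\<dots> = (\<Sum>i=1..l. - (if d < i then (D + (int i - int d - 1) * \<Delta>) * x i else 0))"
    by (intro sum.cong) (auto simp: of_nat_diff algebra_simps)
  also have "\<dots> = - (\<Sum>i=Suc d..l. (D + (int i - int d - 1) * \<Delta>) * x i)"
    by (simp add: sum_negf sum.If_cases) (intro sum.cong; auto)
  finally show ?thesis .
qed

lemma cartan_row_block:
  assumes "1 \<le> j" "j \<le> d" "d \<le> n"
  shows "(\<Sum>i=1..n. cartan_ext C d j i * c i)
       = (\<Sum>i=1..d. C j i * c i) - (if j = d \<and> d < n then c (Suc d) else 0)"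
proof -
  have "{1..n} = {1..d} \<union> {Suc d..n}"
    using assms by auto
  then have "(\<Sum>i=1..n. cartan_ext C d j i * c i)
      = (\<Sum>i=1..d. cartan_ext C d j i * c i) + (\<Sum>i=Suc d..n. cartan_ext C d j i * c i)"
    by (simp add: sum.union_disjoint)
  also have "(\<Sum>i=1..d. cartan_ext C d j i * c i) = (\<Sum>i=1..d. C j i * c i)"
    using assms(2) by (intro sum.cong) (auto simp: cartan_ext_def)
  also have "(\<Sum>i=Suc d..n. cartan_ext C d j i * c i) = (\<Sum>i=Suc d..n. if i = Suc d \<and> j = d then - c i else 0)"
    using assms(2) by (intro sum.cong) (auto simp: cartan_ext_def)
  also have "\<dots> = - (if j = d \<and> d < n then c (Suc d) else 0)"
    by (cases "j = d") (auto simp: sum.delta)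
  finally show ?thesis
    by simp
qed

lemma cartan_row_chain:
  assumes "1 \<le> d" "d < j" "j \<le> n"
  shows "(\<Sum>i=1..n. cartan_ext C d j i * c i) = 2 * c j - c (j - 1) - (if j < n then c (Suc j) else 0)"
proof -
  have "(\<Sum>i=1..n. cartan_ext C d j i * c i)
      = (\<Sum>i=1..n. (if i = j then 2 * c i else 0) + (if i = j - 1 then - c i else 0)
                    + (if i = Suc j then - c i else 0))"
    using assms by (intro sum.cong) (auto simp: cartan_ext_def)
  also have "\<dots> = 2 * c j - c (j - 1) - (if j < n then c (Suc j) else 0)"
  proof -
    have "(\<Sum>i=1..n. if i = j - 1 then - c i else 0) = - c (j - 1)"
      using assms by (subst sum.delta) auto
    then show ?thesis
      using assms by (simp add: sum.distrib)
  qed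
  finally show ?thesis .
qed

lemma chain_row_equation:
  assumes "1 \<le> d" "d < j" "j \<le> n" "l \<le> n"
    and x0: "\<And>k. l < k \<Longrightarrow> x k = 0" and y0: "\<And>m. r < m \<Longrightarrow> y m = 0"
    and c: "\<And>i. d \<le> i \<Longrightarrow> i \<le> n \<Longrightarrow> c i = tail_potential y r (n + 1 - i) + head_potential x l i"
  shows "(\<Sum>i=1..n. cartan_ext C d j i * c i) = x j + y (n + 1 - j)"
proof -
  have c_next: "(if j < n then c (Suc j) else 0) = tail_potential y r (n - j) + head_potential x l (j + 1)"
    using assms(2-4) by (auto simp: c head_potential_eq_0)
  have c_here: "c j = tail_potential y r (n + 1 - j) + head_potential x l j"
    using assms(2,3) by (simp add: c)
  have c_prev: "c (j - 1) = tail_potential y r (n + 1 - j + 1) + head_potential x l (j - 1)"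
    using assms(2,3) by (simp add: c Suc_diff_le)
  have "2 * tail_potential y r (n + 1 - j) - tail_potential y r (n + 1 - j + 1) - tail_potential y r (n - j)
      = y (n + 1 - j)"
    using tail_potential_second_diff[of "n + 1 - j" r y] assms(3) y0 by simp
  moreover have "2 * head_potential x l j - head_potential x l (j - 1) - head_potential x l (j + 1) = x j"
    using head_potential_second_diff[of j l x] assms(1,2) x0 by simp
  ultimately show ?thesis
    using cartan_row_chain[OF assms(1-3), of C c] c_next c_here c_prev by simp
qed

lemma block_row_equation:
  assumes "1 \<le> j" "j \<le> d" "d \<le> l" "l + r \<le> n"
    and y0: "\<And>m. r < m \<Longrightarrow> y m = 0"
    and c_block: "\<And>i. 1 \<le> i \<Longrightarrow> i < d \<Longrightarrow> c i = v (i - 1)"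
    and c_chain: "\<And>i. d \<le> i \<Longrightarrow> i \<le> n \<Longrightarrow> c i = tail_potential y r (n + 1 - i) + head_potential x l i"
    and v_last: "v (d - 1) = tail_potential y r r + head_potential x l d"
    and block: "(\<Sum>k<d. cartan_mat C d d $$ (j - 1, k) * v k)
                = x j + (if j = d then tail_potential y r r + head_potential x l (Suc d) else 0)"
  shows "(\<Sum>i=1..n. cartan_ext C d j i * c i) = x j + y (n + 1 - j)"
proof -
  have "(\<Sum>i=1..d. C j i * c i) = (\<Sum>k<d. C j (Suc k) * c (Suc k))"
    by (simp add: sum.atLeast1_atMost_eq)
  also have "\<dots> = (\<Sum>k<d. cartan_mat C d d $$ (j - 1, k) * v k)"
  proof (intro sum.cong refl)
    fix k assume k: "k \<in> {..<d}"
    have "c (Suc k) = v k"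
    proof (cases "Suc k < d")
      case True
      then show ?thesis by (simp add: c_block)
    next
      case False
      with k have "k = d - 1" by simp
      then show ?thesis
        using assms(3,4) k v_last by (simp add: c_chain tail_potential_const)
    qed
    then show "C j (Suc k) * c (Suc k) = cartan_mat C d d $$ (j - 1, k) * v k"
      using assms(1,2) k by (simp add: cartan_ext_def)
  qed
  moreover have "(if j = d \<and> d < n then c (Suc d) else 0)
      = (if j = d then tail_potential y r r + head_potential x l (Suc d) else 0)"
  proof (cases "d < n")
    case True
    then show ?thesis
      using assms(3,4) by (simp add: c_chain tail_potential_const)
  next
    case False
    with assms(3,4) have "r = 0" "l \<le> Suc d" by auto
    with False show ?thesis
      by (simp add: tail_potential_def head_potential_eq_0)
  qed
  moreover have "y (n + 1 - j) = 0"
    using y0 assms(2-4) by simp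
  ultimately show ?thesis
    using cartan_row_block[of j d n C c] assms(1-4) block by simp
qed

lemma root_combination_of_block_solution:
  assumes "1 \<le> d" "d \<le> l" "l + r \<le> n"
    and x0: "\<And>k. l < k \<Longrightarrow> x k = 0" and y0: "\<And>m. r < m \<Longrightarrow> y m = 0"
    and v_last: "v (d - 1) = tail_potential y r r + head_potential x l d"
    and v_block: "\<And>j. j < d \<Longrightarrow> (\<Sum>k<d. cartan_mat C d d $$ (j, k) * v k)
                   = x (Suc j) + (if j = d - 1 then tail_potential y r r + head_potential x l (Suc d) else 0)"
    and c_block: "\<And>i. 1 \<le> i \<Longrightarrow> i < d \<Longrightarrow> c i = v (i - 1)"
    and c_chain: "\<And>i. d \<le> i \<Longrightarrow> i \<le> n \<Longrightarrow> c i = tail_potential y r (n + 1 - i) + head_potential x l i"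
  shows "is_root_combination C d n (gamma_coef x y n) c"
  unfolding is_root_combination_def gamma_coef_def
proof
  fix j assume j: "j \<in> {1..n}"
  show "x j + y (n + 1 - j) = (\<Sum>i=1..n. cartan_ext C d j i * c i)"
  proof (cases "j \<le> d")
    case True
    have "(\<Sum>k<d. cartan_mat C d d $$ (j - 1, k) * v k)
        = x j + (if j = d then tail_potential y r r + head_potential x l (Suc d) else 0)"
      using v_block[of "j - 1"] j True by auto
    with j True show ?thesis
      by (intro block_row_equation[symmetric]) (use assms in auto)
  next
    case False
    with j show ?thesis
      by (intro chain_row_equation[symmetric]) (use assms in auto)
  qed
qed

lemma gamma_norm_eq_of_int:
  assumes "1 \<le> d" "detX C d d \<noteq> 0" "fin_supp x" "d \<le> l" "ell x \<le> l"
  shows "gamma_norm C d x y = of_int ((\<Sum>i=1..d. adj_mat (cartan_mat C d d) $$ (d - 1, i - 1) * x i)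
           + (\<Sum>i=Suc d..l. (detX C d d + (int i - int d - 1) * Delta C d) * x i)
           - Delta C d * tail_potential y (ell y) (ell y))"
proof -
  have "(\<Sum>i=1..ell x. a_coef C d i * of_int (x i)) = (\<Sum>i=1..l. a_coef C d i * of_int (x i))"
    using assms(3,5) fin_supp_beyond_ell by (intro sum.mono_neutral_left) auto
  also have "\<dots> = (\<Sum>i=1..d. a_coef C d i * of_int (x i)) + (\<Sum>i=Suc d..l. a_coef C d i * of_int (x i))"
  proof -
    have "{1..l} = {1..d} \<union> {Suc d..l}"
      using assms(4) by auto
    then show ?thesis
      by (simp add: sum.union_disjoint)
  qed
  also have "(\<Sum>i=1..d. a_coef C d i * of_int (x i))
      = (\<Sum>i=1..d. of_int (adj_mat (cartan_mat C d d) $$ (d - 1, i - 1) * x i))"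
    using assms(2) by (intro sum.cong) (simp_all add: a_coef_block)
  also have "(\<Sum>i=Suc d..l. a_coef C d i * of_int (x i))
      = (\<Sum>i=Suc d..l. of_int ((detX C d d + (int i - int d - 1) * Delta C d) * x i))"
    using assms(1) by (intro sum.cong) (simp_all add: a_coef_chain)
  finally show ?thesis
    by (simp add: gamma_norm_def tail_potential_const of_int_sum)
qed

lemma block_condition_of_gamma_norm_zero:
  assumes "1 \<le> d" "extensible C d" "fin_supp x" "gamma_norm C d x y = 0" "d \<le> l" "ell x \<le> l"
  defines "s \<equiv> tail_potential y (ell y) (ell y)"
  shows "(\<Sum>i<d. adj_mat (cartan_mat C d d) $$ (d - 1, i)
                 * (x (Suc i) + (if i = d - 1 then s + head_potential x l (Suc d) else 0)))
       = (s + head_potential x l d) * detX C d d"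
proof -
  let ?A = "adj_mat (cartan_mat C d d)" and ?D = "detX C d d" and ?\<Delta> = "Delta C d"
  obtain e where e: "d = Suc e"
    using assms(1) by (cases d) auto
  have norm: "(\<Sum>i=1..d. ?A $$ (d - 1, i - 1) * x i)
      = ?\<Delta> * s - (\<Sum>i=Suc d..l. (?D + (int i - int d - 1) * ?\<Delta>) * x i)"
  proof -
    have "gamma_norm C d x y = of_int ((\<Sum>i=1..d. ?A $$ (d - 1, i - 1) * x i)
        + (\<Sum>i=Suc d..l. (?D + (int i - int d - 1) * ?\<Delta>) * x i) - ?\<Delta> * s)"
      unfolding s_def by (rule gamma_norm_eq_of_int) (use assms in \<open>simp_all add: extensible_def\<close>)
    with assms(4) show ?thesis
      by (simp only: of_int_eq_0_iff)
  qed
  have corner: "?A $$ (d - 1, d - 1) = ?D - ?\<Delta>"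
    using adj_mat_diag[OF cartan_mat_carrier, of "d - 1" d C d] detX_arith_progression[of d "d - 1" C] assms(1)
    by (simp add: e mat_delete_cartan_mat_last detX_def)
  have "(\<Sum>i<d. ?A $$ (d - 1, i) * (x (Suc i) + (if i = d - 1 then s + head_potential x l (Suc d) else 0)))
      = (\<Sum>i<d. ?A $$ (d - 1, i) * x (Suc i)
               + (if i = d - 1 then ?A $$ (d - 1, d - 1) * (s + head_potential x l (Suc d)) else 0))"
    by (intro sum.cong) (auto simp: algebra_simps)
  also have "\<dots> = (\<Sum>i=1..d. ?A $$ (d - 1, i - 1) * x i) + ?A $$ (d - 1, d - 1) * (s + head_potential x l (Suc d))"
    using assms(1) by (simp add: sum.distrib sum.atLeast1_atMost_eq)
  also have "\<dots> = (s + head_potential x l d) * ?D"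
  proof -
    have chain: "(\<Sum>i=Suc d..l. (?D + (int i - int d - 1) * ?\<Delta>) * x i)
        = (?D - ?\<Delta>) * head_potential x l (Suc d) - ?D * head_potential x l d"
      using head_potential_weighted_diff[of ?D x l d ?\<Delta>] by simp
    show ?thesis
      unfolding norm corner chain by (simp add: algebra_simps)
  qed
  finally show ?thesis .
qed

theorem proposition4p1:
  fixes C :: "nat \<Rightarrow> nat \<Rightarrow> int" and d :: nat and x y :: "nat \<Rightarrow> int"
  assumes "d \<ge> 1"
    and "is_gcm C d" and "symmetrizable C d"
    and "extensible C d"
    and "fin_supp x" and "fin_supp y"
    and "gamma_norm C d x y = 0"
  shows "\<exists>(p :: nat \<Rightarrow> int) (q :: nat \<Rightarrow> int) (s :: int).
           \<forall>n \<ge> max (ell x) d + ell y.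
             is_root_combination C d n (gamma_coef x y n)
               (\<lambda>i. if i \<le> max (ell x) d - 1 then p i
                    else if i \<le> n + 1 - ell y then s
                    else q (n - i + 1))"
proof -
  define l r where "l = max (ell x) d" and "r = ell y"
  define s where "s = tail_potential y r r"
  have dl: "d \<le> l" and x0: "\<And>k. l < k \<Longrightarrow> x k = 0" and y0: "\<And>m. r < m \<Longrightarrow> y m = 0"
    using fin_supp_beyond_ell assms(5,6) by (auto simp: l_def r_def)
  obtain v where v_last: "v (d - 1) = s + head_potential x l d"
    and v_block: "\<forall>j<d. (\<Sum>k<d. cartan_mat C d d $$ (j, k) * v k)
                   = x (Suc j) + (if j = d - 1 then s + head_potential x l (Suc d) else 0)"
    using cartan_block_solvable[OF assms(1,4) block_condition_of_gamma_norm_zero[OF assms(1,4,5,7), of l]]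
    by (auto simp: l_def r_def s_def)
  show ?thesis
  proof (intro exI allI impI)
    fix n assume "max (ell x) d + ell y \<le> n"
    then have "l + r \<le> n"
      by (simp add: l_def r_def)
    then show "is_root_combination C d n (gamma_coef x y n)
        (\<lambda>i. if i \<le> max (ell x) d - 1 then (if i < d then v (i - 1) else s + head_potential x l i)
             else if i \<le> n + 1 - ell y then s else tail_potential y r (n - i + 1))"
      unfolding l_def[symmetric] r_def[symmetric]
      using assms(1) dl v_last v_block x0 y0
      by (intro root_combination_of_block_solution[of d l r n x y v])
        (auto simp: s_def tail_potential_const head_potential_eq_0 Suc_diff_le)
  qed
qed

end
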